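(* Let $d\in\mathbb{Z}_{\ge1}$, $\gamma\in\mathbb{Z}_{\ge2}$, and let integers $y(\ell),x^{\mathrm{bin}}(\ell),z(\ell)$ ($0\le\ell\le d-1$), $r(\ell)$ ($0\le\ell\le d$) form a solution of the constraint system $\mathcal{S}(d,\gamma)$. If $r(d)=\gamma^i$ for some integer $i$ with $1\le i\le 2^d-1$, then $(x^{\mathrm{bin}}(0),\dots,x^{\mathrm{bin}}(d-1))$ is the binary encoding of $i$, i.e. $i=\sum_{\ell=0}^{d-1}2^\ell x^{\mathrm{bin}}(\ell)$.
   Context: Constraint system $\mathcal{S}(d,\gamma)$: for given integers $d\ge1$, $\gamma\ge2$, integer variables $y(\ell),x^{\mathrm{bin}}(\ell),z(\ell)$ for $\ell\in\{0,\dots,d-1\}$ and $r(\ell)$ for $\ell\in\{0,\dots,d\}$, subject to, for every $\ell\in\{0,\dots,d-1\}$ (writing $g_\ell:=\gamma^{2^\ell}$): (C1) $y(\ell)\ge0$; (C2) $y(\ell)\le r(\ell+1)/g_\ell+1/(g_\ell+1)$; (C3) $y(\ell)\ge r(\ell+1)/g_\ell-(g_\ell-1)/g_\ell$; (C4) $x^{\mathrm{bin}}(\ell)\ge0$; (C5) $x^{\mathrm{bin}}(\ell)\le1$; (C6) $x^{\mathrm{bin}}(\ell)\le y(\ell)$; (C7) $y(\ell)\le(g_\ell+1)x^{\mathrm{bin}}(\ell)$; (C8) $r(\ell)\ge0$; (C9) $(g_\ell-1)z(\ell)+r(\ell)=r(\ell+1)$; (C10) $z(\ell)\ge0$; (C11)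 $z(\ell)\ge -g_\ell+g_\ell x^{\mathrm{bin}}(\ell)+r(\ell)$; (C12) $z(\ell)\le g_\ell x^{\mathrm{bin}}(\ell)$; (C13) $z(\ell)\le r(\ell)$; and additionally $r(0)=1$, $r(d)\ge2$, $r(d)\le\gamma^{2^d-1}$. *)

theory Defs
  imports Main HOL.Rat
begin

text \<open>Variables are integer-valued functions on
  indices; only indices 0..d-1 (for y, xbin, z) and 0..d (for r) are constrained.
  Constraints with fractions are read over the rationals. g l = gamma^(2^l).\<close>

definition sysS :: "nat \<Rightarrow> int \<Rightarrow> (nat \<Rightarrow> int) \<Rightarrow> (nat \<Rightarrow> int) \<Rightarrow> (nat \<Rightarrow> int) \<Rightarrow> (nat \<Rightarrow> int) \<Rightarrow> bool"
  where "sysS d \<gamma> y xbin z r \<longleftrightarrow>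
    (\<forall>l<d. let g = \<gamma> ^ (2 ^ l) in
       y l \<ge> 0 \<and>
       (of_int (y l) :: rat) \<le> of_int (r (Suc l)) / of_int g + 1 / (of_int g + 1) \<and>
       (of_int (y l) :: rat) \<ge> of_int (r (Suc l)) / of_int g - (of_int g - 1) / of_int g \<and>
       xbin l \<ge> 0 \<and>
       xbin l \<le> 1 \<and>
       xbin l \<le> y l \<and>
       y l \<le> (g + 1) * xbin l \<and>
       r l \<ge> 0 \<and>
       (g - 1) * z l + r l = r (Suc l) \<and>
       z l \<ge> 0 \<and>
       z l \<ge> - g + g * xbin l + r l \<and>
       z l \<le> g * xbin l \<and>
       z l \<le> r l) \<and>
    r 0 = 1 \<and> r d \<ge> 2 \<and> r d \<le> \<gamma> ^ (2 ^ d - 1)"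

end

theory Submission
  imports Defs
begin

text \<open>Constraints (C9)--(C13) are a big-M linearisation of z(l) = x(l) r(l) for a binary
  x(l), so layer l multiplies r by g(l)^x(l). Starting from r(0) = 1 this gives
  r(d) = \<gamma>^e with e = \<Sum> 2^l x(l), and \<gamma>^i = \<gamma>^e forces i = e since \<gamma> \<ge> 2.\<close>

lemma big_M_product_step:
  fixes g x z r r' :: int
  assumes "0 \<le> x" "x \<le> 1" "(g - 1) * z + r = r'"
    and "0 \<le> z" "- g + g * x + r \<le> z" "z \<le> g * x" "z \<le> r"
  shows "r' = r * g ^ nat x"
proof -
  consider "x = 0" | "x = 1" using assms(1,2) by linarith
  then show ?thesis
  proof cases
    case 1
    then have "z = 0" using assms(4,6) by simp
    then show ?thesis using 1 assms(3) by simp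
  next
    case 2
    then have "z = r" using assms(5,7) by simp
    then show ?thesis using 2 assms(3) by (simp add: algebra_simps)
  qed
qed

lemma sysS_xbin_bounds:
  assumes "sysS d \<gamma> y xbin z r" "l < d"
  shows "0 \<le> xbin l" "xbin l \<le> 1"
  using assms unfolding sysS_def Let_def by auto

lemma sysS_r_Suc:
  assumes "sysS d \<gamma> y xbin z r" "l < d"
  shows "r (Suc l) = r l * (\<gamma> ^ 2 ^ l) ^ nat (xbin l)"
  using assms unfolding sysS_def Let_def
  by (intro big_M_product_step[of "xbin l" "\<gamma> ^ 2 ^ l" "z l"]) auto

lemma sysS_r_eq_power:
  assumes "sysS d \<gamma> y xbin z r" "k \<le> d"
  shows "r k = \<gamma> ^ (\<Sum>l<k. 2 ^ l * nat (xbin l))"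
  using assms(2)
proof (induction k)
  case 0
  then show ?case using assms(1) unfolding sysS_def by simp
next
  case (Suc k)
  then have "r (Suc k) = \<gamma> ^ (\<Sum>l<k. 2 ^ l * nat (xbin l)) * (\<gamma> ^ 2 ^ k) ^ nat (xbin k)"
    using sysS_r_Suc[OF assms(1)] by simp
  then show ?case by (simp add: power_add power_mult)
qed

lemma sysS_binary_value:
  assumes "sysS d \<gamma> y xbin z r"
  shows "int (\<Sum>l<d. 2 ^ l * nat (xbin l)) = (\<Sum>l<d. 2 ^ l * xbin l)"
  unfolding of_nat_sum using sysS_xbin_bounds(1)[OF assms] by (intro sum.cong) auto

theorem mainTheorem7:
  fixes d :: nat and \<gamma> :: int and y xbin z r :: "nat \<Rightarrow> int" and i :: nat
  assumes "d \<ge> 1" and "\<gamma> \<ge> 2"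
    and "sysS d \<gamma> y xbin z r"
    and "1 \<le> i" and "i \<le> 2 ^ d - 1"
    and "r d = \<gamma> ^ i"
  shows "int i = (\<Sum>l<d. 2 ^ l * xbin l)"
proof -
  have "\<gamma> ^ i = \<gamma> ^ (\<Sum>l<d. 2 ^ l * nat (xbin l))"
    using sysS_r_eq_power[OF assms(3) order.refl] assms(6) by simp
  then have "i = (\<Sum>l<d. 2 ^ l * nat (xbin l))"
    using assms(2) by (simp add: power_inject_exp)
  then show ?thesis using sysS_binary_value[OF assms(3)] by simp
qed

end
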